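(* Let $\varphi=\nu\tilde n.\sigma$ be a frame well-formed with respect to $\mathtt{s}\in\tilde n$ such that $\varphi\nvdash\mathtt{s}$. Let $U$, $V$ and $M$ be terms public with respect to $\varphi$, with all variables of $U$ and of $V$ in $\mathrm{dom}(\sigma)$ and $M$ ground. Then $U\sigma[\mathtt{s}/M]=V\sigma[\mathtt{s}/M]$ (syntactic equality) implies $U\sigma=V\sigma$.
   Context: Terms over $\Sigma=\{\mathsf{enc}/3,\mathsf{dec}/2,\mathsf{enca}/3,\mathsf{deca}/2,\mathsf{pub}/1,\mathsf{priv}/1,\langle\cdot,\cdot\rangle/2,\pi_1/1,\pi_2/1,\mathsf{sign}/2,\mathsf{check}/3,\mathsf{retrieve}/1\}$, constants (including $\mathsf{ok}$), names and variables; destructors are $\pi_1,\pi_2,\mathsf{dec},\mathsf{deca},\mathsf{check},\mathsf{retrieve}$. Equational theory $E$: $\pi_i(\langle z_1,z_2\rangle)=z_i$, $\mathsf{dec}(\mathsf{enc}(z_1,z_2,z_3),z_2)=z_1$, $\mathsf{deca}(\mathsf{enca}(z_1,\mathsf{pub}(z_2),z_3),\mathsf{priv}(z_2))=z_1$, $\mathsf{check}(z_1,\mathsf{sign}(z_1,\mathsf{priv}(z_2)),\mathsf{pub}(z_2))=\mathsf{ok}$, $\mathsf{retrieve}(\mathsf{sign}(z_1,z_2))=z_1$. Positions of terms are sequences of positive integers, $T|_p$ the subterm at $p$. A frame $\varphi=\nu\tilde n.\sigma$: finite set of restricted names $\tilde n$ and acyclic substitution $\sigma$. Public term w.r.t.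 $\varphi$: no name of $\tilde n$ and no $\mathsf{priv}$. $\varphi\vdash M$: least relation containing $x\sigma$ for $x\in\mathrm{dom}(\sigma)$ and names outside $\tilde n$, closed under application of symbols other than $\mathsf{priv}$ and under $=_E$. $T[\mathtt{s}/M]$ replaces each occurrence of the name $\mathtt{s}$ by $M$. An encryption occurrence $q$ in $U$ (head of $U|_q$ in $\{\mathsf{enc},\mathsf{enca}\}$) is an agent encryption w.r.t. names $\tilde m$ if $U|_{q\cdot3}\in\tilde m$, and a probabilistic encryption w.r.t. a set of terms $S$ if for all $V\in S$ and $p$ with $V|_p=U|_{q\cdot3}$ we have $p=q'\cdot3$ with $V|_{q'}=U|_q$. $\varphi$ is well-formed w.r.t. $\mathtt{s}$ if (1) every encryption in $\sigma$ is an agent encryption w.r.t. $\tilde n\setminus\{\mathtt{s}\}$ and a probabilistic encryption w.r.t. $\mathrm{ran}(\sigma)$; (2) for all subterms $\mathsf{enc}(M,K,R)$, $\mathsf{enca}(M',K',R')$, $\mathsf{sign}(U,V)$, $\mathsf{pub}(W)$, $\mathsf{priv}(W')$ of $\varphi$, $\mathtt{s}$ does not occur in $K,K',V,W,W',R,R'$; (3) $\varphi$ contains no destructor. *)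

theory Defs
  imports Main
begin

datatype fsym = Enc | Dec | Enca | Deca | Pub | Priv | Pair | Pi1 | Pi2 | Sign | Check | Retrieve

fun arity :: "fsym \<Rightarrow> nat" where
  "arity Enc = 3" | "arity Dec = 2" | "arity Enca = 3" | "arity Deca = 2"
| "arity Pub = 1" | "arity Priv = 1" | "arity Pair = 2" | "arity Pi1 = 1"
| "arity Pi2 = 1" | "arity Sign = 2" | "arity Check = 3" | "arity Retrieve = 1"

definition destructors :: "fsym set" where
  "destructors = {Pi1, Pi2, Dec, Deca, Check, Retrieve}"

datatype "term" = Var nat | Nm nat | Cst string | Fn fsym "term list"

definition ok :: "term" where "ok = Cst ''ok''"

fun wf_term :: "term \<Rightarrow> bool" where
  "wf_term (Fn f ts) = (length ts = arity f \<and> (\<forall>t\<in>set ts. wf_term t))"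
| "wf_term _ = True"

fun vars :: "term \<Rightarrow> nat set" where
  "vars (Var x) = {x}"
| "vars (Fn f ts) = (\<Union>t\<in>set ts. vars t)"
| "vars _ = {}"

definition ground :: "term \<Rightarrow> bool" where "ground t \<longleftrightarrow> vars t = {}"

section \<open>Positions (1-based argument indices)\<close>

inductive at_pos :: "term \<Rightarrow> nat list \<Rightarrow> term \<Rightarrow> bool" where
  at_root: "at_pos t [] t"
| at_arg: "i < length ts \<Longrightarrow> at_pos (ts ! i) p u \<Longrightarrow> at_pos (Fn f ts) (Suc i # p) u"

definition subterms :: "term \<Rightarrow> term set" where
  "subterms t = {u. \<exists>p. at_pos t p u}"

definition occurs_name :: "nat \<Rightarrow> term \<Rightarrow> bool" where
  "occurs_name n t \<longleftrightarrow> Nm n \<in> subterms t"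

fun head :: "term \<Rightarrow> fsym option" where
  "head (Fn f ts) = Some f"
| "head _ = None"

inductive eqE :: "term \<Rightarrow> term \<Rightarrow> bool" (infix "=\<^sub>E" 50) where
  E_refl: "t =\<^sub>E t"
| E_sym: "t =\<^sub>E u \<Longrightarrow> u =\<^sub>E t"
| E_trans: "t =\<^sub>E u \<Longrightarrow> u =\<^sub>E v \<Longrightarrow> t =\<^sub>E v"
| E_cong: "t =\<^sub>E u \<Longrightarrow> Fn f (xs @ t # ys) =\<^sub>E Fn f (xs @ u # ys)"
| E_pi1: "Fn Pi1 [Fn Pair [z1, z2]] =\<^sub>E z1"
| E_pi2: "Fn Pi2 [Fn Pair [z1, z2]] =\<^sub>E z2"
| E_dec: "Fn Dec [Fn Enc [z1, z2, z3], z2] =\<^sub>E z1"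
| E_deca: "Fn Deca [Fn Enca [z1, Fn Pub [z2], z3], Fn Priv [z2]] =\<^sub>E z1"
| E_check: "Fn Check [z1, Fn Sign [z1, Fn Priv [z2]], Fn Pub [z2]] =\<^sub>E ok"
| E_retrieve: "Fn Retrieve [Fn Sign [z1, z2]] =\<^sub>E z1"

type_synonym subst = "nat \<Rightarrow> term option"

fun subst1 :: "subst \<Rightarrow> term \<Rightarrow> term" where
  "subst1 \<sigma> (Var x) = (case \<sigma> x of Some t \<Rightarrow> t | None \<Rightarrow> Var x)"
| "subst1 \<sigma> (Fn f ts) = Fn f (map (subst1 \<sigma>) ts)"
| "subst1 \<sigma> t = t"

definition subst_dep :: "subst \<Rightarrow> (nat \<times> nat) set" where
  "subst_dep \<sigma> = {(x, y). x \<in> dom \<sigma> \<and> y \<in> vars (the (\<sigma> x))}"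

text \<open>Application of an acyclic substitution: iterate until all domain variables are
  eliminated; for an acyclic substitution, card (dom \<sigma>) iterations suffice.\<close>
definition app_subst :: "term \<Rightarrow> subst \<Rightarrow> term" (infixl "\<cdot>" 60) where
  "t \<cdot> \<sigma> = (subst1 \<sigma> ^^ card (dom \<sigma>)) t"

definition is_frame :: "nat set \<Rightarrow> subst \<Rightarrow> bool" where
  "is_frame ns \<sigma> \<longleftrightarrow> finite ns \<and> finite (dom \<sigma>) \<and> acyclic (subst_dep \<sigma>)
     \<and> (\<forall>t\<in>ran \<sigma>. wf_term t)"

definition frame_subterms :: "subst \<Rightarrow> term set" where
  "frame_subterms \<sigma> = (\<Union>t\<in>ran \<sigma>. subterms t)"

definition public :: "nat set \<Rightarrow> term \<Rightarrow> bool" where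
  "public ns t \<longleftrightarrow> (\<forall>n\<in>ns. \<not> occurs_name n t) \<and> (\<forall>u\<in>subterms t. head u \<noteq> Some Priv)"

inductive deducible :: "nat set \<Rightarrow> subst \<Rightarrow> term \<Rightarrow> bool" where
  ded_var: "x \<in> dom \<sigma> \<Longrightarrow> deducible ns \<sigma> (Var x \<cdot> \<sigma>)"
| ded_name: "n \<notin> ns \<Longrightarrow> deducible ns \<sigma> (Nm n)"
| ded_const: "deducible ns \<sigma> (Cst c)"
| ded_fun: "f \<noteq> Priv \<Longrightarrow> length ts = arity f \<Longrightarrow> (\<forall>t\<in>set ts. deducible ns \<sigma> t)
     \<Longrightarrow> deducible ns \<sigma> (Fn f ts)"
| ded_eq: "deducible ns \<sigma> t \<Longrightarrow> t =\<^sub>E u \<Longrightarrow> deducible ns \<sigma> u"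

fun replace_name :: "term \<Rightarrow> nat \<Rightarrow> term \<Rightarrow> term" where
  "replace_name (Nm n) s M = (if n = s then M else Nm n)"
| "replace_name (Fn f ts) s M = Fn f (map (\<lambda>t. replace_name t s M) ts)"
| "replace_name t s M = t"

definition is_encryption_at :: "term \<Rightarrow> nat list \<Rightarrow> bool" where
  "is_encryption_at U q \<longleftrightarrow> (\<exists>u. at_pos U q u \<and> head u \<in> {Some Enc, Some Enca})"

definition agent_encryption :: "nat set \<Rightarrow> term \<Rightarrow> nat list \<Rightarrow> bool" where
  "agent_encryption ms U q \<longleftrightarrow> (\<exists>m\<in>ms. at_pos U (q @ [3]) (Nm m))"

definition probabilistic_encryption :: "term set \<Rightarrow> term \<Rightarrow> nat list \<Rightarrow> bool" where
  "probabilistic_encryption S U q \<longleftrightarrow>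
     (\<forall>R Uq. at_pos U (q @ [3]) R \<longrightarrow> at_pos U q Uq \<longrightarrow>
        (\<forall>V\<in>S. \<forall>p. at_pos V p R \<longrightarrow> (\<exists>q'. p = q' @ [3] \<and> at_pos V q' Uq)))"

definition well_formed_frame :: "nat set \<Rightarrow> subst \<Rightarrow> nat \<Rightarrow> bool" where
  "well_formed_frame ns \<sigma> s \<longleftrightarrow>
     (\<forall>U\<in>ran \<sigma>. \<forall>q. is_encryption_at U q \<longrightarrow>
        agent_encryption (ns - {s}) U q \<and> probabilistic_encryption (ran \<sigma>) U q)
   \<and> (\<forall>u\<in>frame_subterms \<sigma>.
        (\<forall>M K R. u = Fn Enc [M, K, R] \<longrightarrow> \<not> occurs_name s K \<and> \<not> occurs_name s R)
      \<and> (\<forall>M K R. u = Fn Enca [M, K, R] \<longrightarrow> \<not> occurs_name s K \<and> \<not> occurs_name s R)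
      \<and> (\<forall>U V. u = Fn Sign [U, V] \<longrightarrow> \<not> occurs_name s V)
      \<and> (\<forall>W. u = Fn Pub [W] \<longrightarrow> \<not> occurs_name s W)
      \<and> (\<forall>W. u = Fn Priv [W] \<longrightarrow> \<not> occurs_name s W))
   \<and> (\<forall>u\<in>frame_subterms \<sigma>. \<forall>f. head u = Some f \<longrightarrow> f \<notin> destructors)"

end

theory Submission
  imports Defs
begin

text \<open>
  Call a term safe if it is the \<sigma>-instance W\<sigma> of a public recipe W, or the \<sigma>-instance u\<sigma> of a
  subterm u of the frame such that u\<sigma> is deducible or \<open>s\<close> does not occur in u. Safe terms are
  never the secret \<open>Nm s\<close>, and the arguments of a safe term are safe again, except for the
  arguments of an encryption taken from the frame. Such an encryption is however determined by
  its randomness: an agent nonce different from \<open>s\<close>, hence untouched by the replacement, which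
  by probabilistic encryption occurs in the frame only as the randomness of that encryption. An induction on the term then
  shows that \<open>replace_name _ s M\<close> is injective on safe terms, and U\<sigma>, V\<sigma> are safe.
\<close>

inductive_cases at_pos_NilE: "at_pos t [] u"
inductive_cases at_pos_ConsE: "at_pos t (i # p) u"

lemma at_pos_unique: "at_pos t p u \<Longrightarrow> at_pos t p v \<Longrightarrow> u = v"
proof (induction arbitrary: v rule: at_pos.induct)
  case (at_root t)
  then show ?case by (auto elim: at_pos_NilE)
next
  case (at_arg i ts p u f)
  from at_arg.prems show ?case by (auto elim!: at_pos_ConsE intro: at_arg.IH)
qed

lemma at_pos_append: "at_pos t q u \<Longrightarrow> at_pos u p v \<Longrightarrow> at_pos t (q @ p) v"
  by (induction rule: at_pos.induct) (auto intro: at_pos.intros)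

lemma at_pos_appendD: "at_pos t (q @ p) v \<Longrightarrow> \<exists>u. at_pos t q u \<and> at_pos u p v"
proof (induction q arbitrary: t)
  case Nil
  then show ?case by (auto intro: at_pos.intros)
next
  case (Cons i q)
  from Cons.prems show ?case by (auto elim!: at_pos_ConsE dest!: Cons.IH intro: at_pos.intros)
qed

lemma wf_term_at_pos: "at_pos t p u \<Longrightarrow> wf_term t \<Longrightarrow> wf_term u"
  by (induction rule: at_pos.induct) auto

lemma at_pos_single: "at_pos (Fn f ws) [Suc i] v \<longleftrightarrow> i < length ws \<and> v = ws ! i"
  by (auto elim!: at_pos_ConsE at_pos_NilE intro: at_pos.intros)

lemma at_pos_third_arg: "at_pos (Fn f ws) [3] v \<longleftrightarrow> 2 < length ws \<and> v = ws ! 2"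
  using at_pos_single[of f ws 2 v] by (simp add: numeral_3_eq_3 numeral_2_eq_2)

lemma subterms_refl: "t \<in> subterms t"
  unfolding subterms_def by (auto intro: at_pos.intros)

lemma subterms_trans: "u \<in> subterms t \<Longrightarrow> v \<in> subterms u \<Longrightarrow> v \<in> subterms t"
  unfolding subterms_def using at_pos_append by blast

lemma subterms_arg:
  assumes "w \<in> set ws"
  shows "subterms w \<subseteq> subterms (Fn f ws)"
proof -
  obtain i where "i < length ws" "w = ws ! i"
    using assms by (auto simp: in_set_conv_nth)
  then show ?thesis
    unfolding subterms_def by (auto intro: at_pos.intros)
qed

lemma occurs_name_arg: "\<not> occurs_name n (Fn f ws) \<Longrightarrow> w \<in> set ws \<Longrightarrow> \<not> occurs_name n w"
  unfolding occurs_name_def using subterms_arg by blast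

lemma public_arg: "public ns (Fn f ws) \<Longrightarrow> w \<in> set ws \<Longrightarrow> public ns w"
  unfolding public_def occurs_name_def using subterms_arg by blast

lemma ran_subset_frame_subterms: "ran \<sigma> \<subseteq> frame_subterms \<sigma>"
  unfolding frame_subterms_def using subterms_refl by blast

lemma frame_subterms_arg:
  assumes "Fn f ws \<in> frame_subterms \<sigma>" and "w \<in> set ws"
  shows "w \<in> frame_subterms \<sigma>"
proof -
  have "w \<in> subterms (Fn f ws)"
    using subterms_arg[OF assms(2)] subterms_refl by blast
  with assms(1) show ?thesis
    unfolding frame_subterms_def using subterms_trans by blast
qed

section \<open>Applying an acyclic substitution\<close>

lemma finite_vars: "finite (vars t)"
  by (induction t) auto

lemma vars_subst1D:
  "y \<in> vars (subst1 \<sigma> t) \<Longrightarrow> \<exists>x\<in>vars t. (x \<in> dom \<sigma> \<and> y \<in> vars (the (\<sigma> x))) \<or> (x \<notin> dom \<sigma> \<and> y = x)"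
proof (induction \<sigma> t rule: subst1.induct)
  case (2 \<sigma> f ts)
  then obtain u where "u \<in> set ts" "y \<in> vars (subst1 \<sigma> u)" by auto
  with 2 show ?case by force
qed (auto split: option.splits)

lemma subst1_disjoint: "vars t \<inter> dom \<sigma> = {} \<Longrightarrow> subst1 \<sigma> t = t"
  by (induction \<sigma> t rule: subst1.induct) (auto split: option.splits intro: map_idI)

lemma subst1_funpow_Fn: "(subst1 \<sigma> ^^ k) (Fn f ts) = Fn f (map (subst1 \<sigma> ^^ k) ts)"
  by (induction k) auto

lemma funpow_fixed_point: "f x = x \<Longrightarrow> (f ^^ k) x = x"
  by (induction k) auto

lemma vars_subst1_funpow:
  "y \<in> vars ((subst1 \<sigma> ^^ k) t) \<Longrightarrow> y \<in> dom \<sigma> \<Longrightarrow> \<exists>x\<in>vars t. (x, y) \<in> subst_dep \<sigma> ^^ k"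
proof (induction k arbitrary: y)
  case 0
  then show ?case by auto
next
  case (Suc k)
  then have "y \<in> vars (subst1 \<sigma> ((subst1 \<sigma> ^^ k) t))" by simp
  with Suc.prems(2) obtain x where
    x: "x \<in> vars ((subst1 \<sigma> ^^ k) t)" "x \<in> dom \<sigma>" "y \<in> vars (the (\<sigma> x))"
    by (auto dest: vars_subst1D)
  from Suc.IH[OF x(1,2)] obtain z where "z \<in> vars t" "(z, x) \<in> subst_dep \<sigma> ^^ k" by blast
  moreover have "(x, y) \<in> subst_dep \<sigma>" using x unfolding subst_dep_def by auto
  ultimately show ?case by auto
qed

locale acyclic_subst =
  fixes \<sigma> :: subst
  assumes finite_dom: "finite (dom \<sigma>)" and acyclic_dep: "acyclic (subst_dep \<sigma>)"
begin

text \<open>A dependency chain of length \<open>card (dom \<sigma>)\<close> ending in \<open>dom \<sigma>\<close> visits one more variable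
  of \<open>dom \<sigma>\<close> than there are, so it contains a cycle.\<close>
lemma dep_chain_card_dom_exits_dom:
  assumes "(x, y) \<in> subst_dep \<sigma> ^^ card (dom \<sigma>)"
  shows "y \<notin> dom \<sigma>"
proof
  assume y: "y \<in> dom \<sigma>"
  define n where "n = card (dom \<sigma>)"
  from assms obtain g where g: "g n = y" "\<forall>i<n. (g i, g (Suc i)) \<in> subst_dep \<sigma>"
    unfolding relpow_fun_conv n_def by blast
  have "g i \<in> dom \<sigma>" if "i \<le> n" for i
  proof (cases "i < n")
    case True
    with g(2) show ?thesis unfolding subst_dep_def by auto
  next
    case False
    with that g(1) y show ?thesis by simp
  qed
  then have "g ` {0..n} \<subseteq> dom \<sigma>" by (meson atLeastAtMost_iff image_subsetI)
  then have "card (g ` {0..n}) \<le> n"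
    unfolding n_def using finite_dom by (rule card_mono[rotated])
  then have "\<not> inj_on g {0..n}"
    by (intro pigeonhole) simp
  then obtain i j where ij: "i < j" "j \<le> n" "g i = g j"
    unfolding inj_on_def by (metis atLeastAtMost_iff linorder_neqE_nat)
  have "(g i, g (i + d)) \<in> subst_dep \<sigma> ^^ d" if "i + d \<le> n" for d
    using that
  proof (induction d)
    case (Suc d)
    then show ?case using g(2) by auto
  qed simp
  from this[of "j - i"] ij have "(g i, g i) \<in> (subst_dep \<sigma>)\<^sup>+"
    unfolding trancl_power by (intro exI[of _ "j - i"]) simp
  with acyclic_dep show False
    unfolding acyclic_def by simp
qed

lemma vars_app_subst: "y \<in> vars (t \<cdot> \<sigma>) \<Longrightarrow> y \<notin> dom \<sigma>"
  unfolding app_subst_def using vars_subst1_funpow dep_chain_card_dom_exits_dom by blast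

lemma subst1_app_subst: "subst1 \<sigma> (t \<cdot> \<sigma>) = t \<cdot> \<sigma>"
  using vars_app_subst by (intro subst1_disjoint) auto

lemma app_subst_Fn [simp]: "Fn f ts \<cdot> \<sigma> = Fn f (map (\<lambda>t. t \<cdot> \<sigma>) ts)"
  unfolding app_subst_def by (simp add: subst1_funpow_Fn)

lemma app_subst_Nm [simp]: "Nm n \<cdot> \<sigma> = Nm n"
  unfolding app_subst_def by (simp add: funpow_fixed_point)

lemma app_subst_Cst [simp]: "Cst c \<cdot> \<sigma> = Cst c"
  unfolding app_subst_def by (simp add: funpow_fixed_point)

lemma app_subst_Var_notin_dom: "x \<notin> dom \<sigma> \<Longrightarrow> Var x \<cdot> \<sigma> = Var x"
  unfolding app_subst_def by (rule funpow_fixed_point) (auto split: option.splits)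

lemma app_subst_Var_in_dom:
  assumes "x \<in> dom \<sigma>"
  shows "Var x \<cdot> \<sigma> = the (\<sigma> x) \<cdot> \<sigma>"
proof -
  have "Var x \<cdot> \<sigma> = subst1 \<sigma> (Var x \<cdot> \<sigma>)"
    by (simp add: subst1_app_subst)
  also have "\<dots> = (subst1 \<sigma> ^^ card (dom \<sigma>)) (subst1 \<sigma> (Var x))"
    unfolding app_subst_def by (rule funpow_swap1)
  also have "subst1 \<sigma> (Var x) = the (\<sigma> x)"
    using assms by auto
  finally show ?thesis
    unfolding app_subst_def .
qed

lemma finite_subst_dep: "finite (subst_dep \<sigma>)"
proof (rule finite_subset)
  show "subst_dep \<sigma> \<subseteq> dom \<sigma> \<times> (\<Union>t\<in>ran \<sigma>. vars t)"
    unfolding subst_dep_def by (auto intro: ranI)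
  show "finite (dom \<sigma> \<times> (\<Union>t\<in>ran \<sigma>. vars t))"
    using finite_dom finite_ran finite_vars by blast
qed

lemma app_subst_Var_cases:
  "y \<in> dom \<sigma> \<Longrightarrow> (\<exists>z. Var y \<cdot> \<sigma> = Var z) \<or> (\<exists>v\<in>ran \<sigma>. (\<forall>z. v \<noteq> Var z) \<and> Var y \<cdot> \<sigma> = v \<cdot> \<sigma>)"
proof (induction y rule: wf_induct_rule[OF finite_acyclic_wf_converse[OF finite_subst_dep acyclic_dep]])
  case (1 y)
  then obtain v where v: "\<sigma> y = Some v" by auto
  then have y_v: "Var y \<cdot> \<sigma> = v \<cdot> \<sigma>"
    using app_subst_Var_in_dom 1(2) by simp
  show ?case
  proof (cases v)
    case (Var z)
    show ?thesis
    proof (cases "z \<in> dom \<sigma>")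
      case True
      have "(z, y) \<in> (subst_dep \<sigma>)\<inverse>"
        using v Var 1(2) unfolding subst_dep_def by auto
      from 1(1)[OF this True] y_v Var show ?thesis by simp
    qed (use y_v Var app_subst_Var_notin_dom in simp)
  qed (use y_v v in \<open>auto intro: ranI\<close>)
qed

lemma app_subst_Var_eq_Fn:
  assumes "x \<in> dom \<sigma>" and "Var x \<cdot> \<sigma> = Fn f ts"
  shows "\<exists>ws. ts = map (\<lambda>t. t \<cdot> \<sigma>) ws \<and> Fn f ws \<in> frame_subterms \<sigma>"
proof -
  from app_subst_Var_cases[OF assms(1)] assms(2) obtain v
    where "v \<in> ran \<sigma>" "\<forall>z. v \<noteq> Var z" "Fn f ts = v \<cdot> \<sigma>"
    by auto
  then show ?thesis
    using ran_subset_frame_subterms by (cases v) auto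
qed

lemma app_subst_Var_eq_Nm:
  assumes "x \<in> dom \<sigma>" and "Var x \<cdot> \<sigma> = Nm n"
  shows "Nm n \<in> ran \<sigma>"
proof -
  from app_subst_Var_cases[OF assms(1)] assms(2) obtain v
    where "v \<in> ran \<sigma>" "\<forall>z. v \<noteq> Var z" "Nm n = v \<cdot> \<sigma>"
    by auto
  then show ?thesis
    by (cases v) auto
qed

end

definition recipe :: "nat set \<Rightarrow> subst \<Rightarrow> term \<Rightarrow> bool" where
  "recipe ns \<sigma> W \<longleftrightarrow> wf_term W \<and> public ns W \<and> vars W \<subseteq> dom \<sigma>"

lemma recipe_arg: "recipe ns \<sigma> (Fn f ws) \<Longrightarrow> w \<in> set ws \<Longrightarrow> recipe ns \<sigma> w"
  unfolding recipe_def using public_arg by auto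

lemma (in acyclic_subst) deducible_recipe: "recipe ns \<sigma> W \<Longrightarrow> deducible ns \<sigma> (W \<cdot> \<sigma>)"
proof (induction W)
  case (Var x)
  then show ?case
    unfolding recipe_def by (simp add: ded_var)
next
  case (Nm n)
  then have "n \<notin> ns"
    unfolding recipe_def public_def occurs_name_def using subterms_refl by blast
  then show ?case by (simp add: ded_name)
next
  case (Cst c)
  then show ?case by (simp add: ded_const)
next
  case (Fn f ws)
  have "f \<noteq> Priv"
    using Fn.prems subterms_refl unfolding recipe_def public_def by fastforce
  moreover have "length ws = arity f"
    using Fn.prems unfolding recipe_def by simp
  moreover have "\<forall>t\<in>set (map (\<lambda>t. t \<cdot> \<sigma>) ws). deducible ns \<sigma> t"
    using Fn.IH recipe_arg[OF Fn.prems] by auto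
  ultimately show ?case by (simp add: ded_fun)
qed

lemma deducible_Pair_fst: "deducible ns \<sigma> (Fn Pair [a, b]) \<Longrightarrow> deducible ns \<sigma> a"
  by (rule ded_eq[OF ded_fun[of Pi1 "[Fn Pair [a, b]]"] E_pi1]) auto

lemma deducible_Pair_snd: "deducible ns \<sigma> (Fn Pair [a, b]) \<Longrightarrow> deducible ns \<sigma> b"
  by (rule ded_eq[OF ded_fun[of Pi2 "[Fn Pair [a, b]]"] E_pi2]) auto

lemma deducible_Sign_msg: "deducible ns \<sigma> (Fn Sign [a, b]) \<Longrightarrow> deducible ns \<sigma> a"
  by (rule ded_eq[OF ded_fun[of Retrieve "[Fn Sign [a, b]]"] E_retrieve]) auto

lemma replace_name_eq_Nm: "replace_name t s M = Nm r \<Longrightarrow> t \<noteq> Nm s \<Longrightarrow> t = Nm r"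
  by (cases t) (auto split: if_splits)

lemma replace_name_eq_Fn:
  "replace_name t s M = Fn f xs \<Longrightarrow> t \<noteq> Nm s \<Longrightarrow>
    \<exists>ts. t = Fn f ts \<and> xs = map (\<lambda>t. replace_name t s M) ts"
  by (cases t) (auto split: if_splits)

lemma replace_name_inj_non_Fn:
  "\<forall>f ts. t1 \<noteq> Fn f ts \<Longrightarrow> t1 \<noteq> Nm s \<Longrightarrow> t2 \<noteq> Nm s \<Longrightarrow>
    replace_name t1 s M = replace_name t2 s M \<Longrightarrow> t1 = t2"
  by (cases t1; cases t2; auto split: if_splits)

section \<open>Safe terms\<close>

definition safe_term :: "nat set \<Rightarrow> subst \<Rightarrow> nat \<Rightarrow> term \<Rightarrow> bool" where
  "safe_term ns \<sigma> s t \<longleftrightarrow> (\<exists>W. recipe ns \<sigma> W \<and> t = W \<cdot> \<sigma>)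
     \<or> (\<exists>u\<in>frame_subterms \<sigma>. t = u \<cdot> \<sigma> \<and> (deducible ns \<sigma> t \<or> \<not> occurs_name s u))"

locale secret_frame =
  fixes ns :: "nat set" and \<sigma> :: subst and s :: nat
  assumes frame: "is_frame ns \<sigma>"
    and well_formed: "well_formed_frame ns \<sigma> s"
    and secret: "\<not> deducible ns \<sigma> (Nm s)"
begin

sublocale acyclic_subst \<sigma>
  using frame unfolding is_frame_def by unfold_locales auto

lemma wf_term_frame_subterm: "u \<in> frame_subterms \<sigma> \<Longrightarrow> wf_term u"
  using frame wf_term_at_pos unfolding is_frame_def frame_subterms_def subterms_def by blast

lemmas well_formed_parts = well_formed[unfolded well_formed_frame_def]

lemma frame_subterm_no_destructor: "Fn f ws \<in> frame_subterms \<sigma> \<Longrightarrow> f \<notin> destructors"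
  using conjunct2[OF conjunct2[OF well_formed_parts]] by fastforce

lemma frame_Sign_key_s_free: "Fn Sign [a, b] \<in> frame_subterms \<sigma> \<Longrightarrow> \<not> occurs_name s b"
  using conjunct1[OF conjunct2[OF well_formed_parts]] by blast

lemma frame_key_s_free: "Fn f [a] \<in> frame_subterms \<sigma> \<Longrightarrow> f = Pub \<or> f = Priv \<Longrightarrow> \<not> occurs_name s a"
  using conjunct1[OF conjunct2[OF well_formed_parts]] by blast

lemma safe_term_not_secret: "safe_term ns \<sigma> s t \<Longrightarrow> t \<noteq> Nm s"
proof
  assume safe: "safe_term ns \<sigma> s t" and t: "t = Nm s"
  from safe consider W where "recipe ns \<sigma> W" "t = W \<cdot> \<sigma>"
    | u where "u \<in> frame_subterms \<sigma>" "t = u \<cdot> \<sigma>" "deducible ns \<sigma> t \<or> \<not> occurs_name s u"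
    unfolding safe_term_def by blast
  then show False
  proof cases
    case 1
    then show False using deducible_recipe secret t by auto
  next
    case (2 u)
    with secret t have u: "Nm s = u \<cdot> \<sigma>" "\<not> occurs_name s u" by auto
    show False
    proof (cases u)
      case (Var x)
      with u(1) have "x \<in> dom \<sigma>" using app_subst_Var_notin_dom by force
      then have "deducible ns \<sigma> (Nm s)" using ded_var[of x \<sigma> ns] u(1) Var by simp
      with secret show False ..
    next
      case (Nm n)
      with u show False using subterms_refl unfolding occurs_name_def by auto
    qed (use u(1) in auto)
  qed
qed

lemma safe_term_Fn:
  assumes "safe_term ns \<sigma> s (Fn f ts)"
  obtains (recipe) ws where "ts = map (\<lambda>t. t \<cdot> \<sigma>) ws" "recipe ns \<sigma> (Fn f ws)"
  | (frame) ws where "ts = map (\<lambda>t. t \<cdot> \<sigma>) ws" "Fn f ws \<in> frame_subterms \<sigma>"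
      "deducible ns \<sigma> (Fn f ts) \<or> \<not> occurs_name s (Fn f ws)"
proof -
  have frame_Var: thesis if "Var x \<cdot> \<sigma> = Fn f ts" for x
  proof -
    have x: "x \<in> dom \<sigma>"
      using that app_subst_Var_notin_dom by force
    from app_subst_Var_eq_Fn[OF x that] obtain ws
      where "ts = map (\<lambda>t. t \<cdot> \<sigma>) ws" "Fn f ws \<in> frame_subterms \<sigma>" by blast
    moreover have "deducible ns \<sigma> (Fn f ts)"
      using ded_var[OF x, of ns] that by simp
    ultimately show thesis using frame by blast
  qed
  from assms consider W where "recipe ns \<sigma> W" "Fn f ts = W \<cdot> \<sigma>"
    | u where "u \<in> frame_subterms \<sigma>" "Fn f ts = u \<cdot> \<sigma>"
      "deducible ns \<sigma> (Fn f ts) \<or> \<not> occurs_name s u"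
    unfolding safe_term_def by blast
  then show thesis
  proof cases
    case (1 W)
    then show thesis
      using recipe frame_Var by (cases W) auto
  next
    case (2 u)
    then show thesis
      using frame frame_Var by (cases u) auto
  qed
qed

lemma safe_term_args_recipe:
  "ts = map (\<lambda>t. t \<cdot> \<sigma>) ws \<Longrightarrow> recipe ns \<sigma> (Fn f ws) \<Longrightarrow> \<forall>x\<in>set ts. safe_term ns \<sigma> s x"
  unfolding safe_term_def using recipe_arg by fastforce

text \<open>Apart from encryptions, every symbol of a well-formed frame either can be opened by the
  attacker (pairs, the message of a signature) or has arguments in which \<open>s\<close> cannot occur.\<close>
lemma safe_term_args_frame:
  assumes ts: "ts = map (\<lambda>t. t \<cdot> \<sigma>) ws" and fs: "Fn f ws \<in> frame_subterms \<sigma>"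
    and ded: "deducible ns \<sigma> (Fn f ts) \<or> \<not> occurs_name s (Fn f ws)"
    and not_enc: "f \<noteq> Enc" "f \<noteq> Enca"
  shows "\<forall>x\<in>set ts. safe_term ns \<sigma> s x"
proof
  fix x assume "x \<in> set ts"
  then obtain w where w: "w \<in> set ws" "x = w \<cdot> \<sigma>" using ts by auto
  have "deducible ns \<sigma> x \<or> \<not> occurs_name s w"
  proof (cases "occurs_name s (Fn f ws)")
    case False
    then show ?thesis using occurs_name_arg w(1) by blast
  next
    case True
    with ded ts have d: "deducible ns \<sigma> (Fn f (map (\<lambda>t. t \<cdot> \<sigma>) ws))" by simp
    have len: "length ws = arity f" using wf_term_frame_subterm[OF fs] by simp
    consider "f = Pair" | "f = Sign" | "f = Pub \<or> f = Priv"
      using not_enc frame_subterm_no_destructor[OF fs] by (cases f) (simp_all add: destructors_def)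
    then show ?thesis
    proof cases
      case 1
      with len obtain a b where "ws = [a, b]" by (auto simp: numeral_2_eq_2 length_Suc_conv)
      with d 1 have "deducible ns \<sigma> (Fn Pair [a \<cdot> \<sigma>, b \<cdot> \<sigma>])" by simp
      moreover from \<open>ws = [a, b]\<close> w have "x = a \<cdot> \<sigma> \<or> x = b \<cdot> \<sigma>" by auto
      ultimately show ?thesis
        using deducible_Pair_fst deducible_Pair_snd by blast
    next
      case 2
      with len obtain a b where ab: "ws = [a, b]" by (auto simp: numeral_2_eq_2 length_Suc_conv)
      with fs 2 have "\<not> occurs_name s b" using frame_Sign_key_s_free by simp
      moreover from ab d 2 have "deducible ns \<sigma> (Fn Sign [a \<cdot> \<sigma>, b \<cdot> \<sigma>])" by simp
      moreover from ab w have "w = a \<or> w = b" by simp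
      ultimately show ?thesis
        using w(2) deducible_Sign_msg by blast
    next
      case 3
      with len obtain a where "ws = [a]" by (auto simp: length_Suc_conv)
      with fs w 3 show ?thesis using frame_key_s_free by auto
    qed
  qed
  then show "safe_term ns \<sigma> s x"
    unfolding safe_term_def using frame_subterms_arg[OF fs w(1)] w(2) by blast
qed

lemma frame_encryption_at:
  assumes "Fn f ws \<in> frame_subterms \<sigma>" and "f = Enc \<or> f = Enca"
  obtains U q where "U \<in> ran \<sigma>" "at_pos U q (Fn f ws)"
    "agent_encryption (ns - {s}) U q" "probabilistic_encryption (ran \<sigma>) U q"
proof -
  obtain U q where U: "U \<in> ran \<sigma>" "at_pos U q (Fn f ws)"
    using assms(1) unfolding frame_subterms_def subterms_def by blast
  then have "is_encryption_at U q"
    unfolding is_encryption_at_def using assms(2) by auto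
  with conjunct1[OF well_formed_parts] U(1) show thesis
    using that U by blast
qed

lemma frame_encryption_nonce:
  assumes fs: "Fn f ws \<in> frame_subterms \<sigma>" and enc: "f = Enc \<or> f = Enca"
  obtains r where "r \<in> ns" "r \<noteq> s" "length ws = 3" "ws ! 2 = Nm r"
proof -
  obtain U q where U: "at_pos U q (Fn f ws)" "agent_encryption (ns - {s}) U q"
    using frame_encryption_at[OF fs enc] by blast
  then obtain r where r: "r \<in> ns" "r \<noteq> s" "at_pos U (q @ [3]) (Nm r)"
    unfolding agent_encryption_def by blast
  then have "at_pos (Fn f ws) [3] (Nm r)"
    using at_pos_appendD at_pos_unique U(1) by metis
  then have "ws ! 2 = Nm r" by (simp add: at_pos_third_arg)
  moreover have "length ws = 3"
    using wf_term_frame_subterm[OF fs] enc by auto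
  ultimately show thesis
    using that r(1,2) by blast
qed

lemma frame_encryption_nonce_unique:
  assumes fs: "Fn f ws \<in> frame_subterms \<sigma>" and enc: "f = Enc \<or> f = Enca"
    and nonce: "ws ! 2 = Nm r" and V: "V \<in> ran \<sigma>" "at_pos V p (Nm r)"
  shows "\<exists>q'. p = q' @ [3] \<and> at_pos V q' (Fn f ws)"
proof -
  obtain U q where U: "at_pos U q (Fn f ws)" "probabilistic_encryption (ran \<sigma>) U q"
    using frame_encryption_at[OF fs enc] by blast
  have "length ws = 3"
    using wf_term_frame_subterm[OF fs] enc by auto
  with nonce have "at_pos (Fn f ws) [3] (Nm r)"
    by (simp add: at_pos_third_arg)
  from at_pos_append[OF U(1) this] U V show ?thesis
    unfolding probabilistic_encryption_def by blast
qed

lemma frame_encryption_determined: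
  assumes fs: "Fn f ws \<in> frame_subterms \<sigma>" and enc: "f = Enc \<or> f = Enca"
    and safe: "safe_term ns \<sigma> s (Fn f ts)"
    and eq: "replace_name (ts ! 2) s M = replace_name (ws ! 2 \<cdot> \<sigma>) s M"
  shows "Fn f ts = Fn f ws \<cdot> \<sigma>"
proof -
  obtain r where r: "r \<in> ns" "r \<noteq> s" "ws ! 2 = Nm r"
    using frame_encryption_nonce[OF fs enc] by blast
  note unique = frame_encryption_nonce_unique[OF fs enc r(3)]
  from eq r have eq_r: "replace_name (ts ! 2) s M = Nm r" by simp
  from safe show ?thesis
  proof (cases rule: safe_term_Fn)
    case (recipe ws')
    then have len: "length ws' = 3" using enc unfolding recipe_def by auto
    with recipe have W: "recipe ns \<sigma> (ws' ! 2)" using recipe_arg by simp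
    have "ws' ! 2 \<cdot> \<sigma> \<noteq> Nm s"
      using deducible_recipe[OF W] secret by auto
    moreover have "replace_name (ws' ! 2 \<cdot> \<sigma>) s M = Nm r"
      using eq_r recipe(1) len by simp
    ultimately have ws'_r: "ws' ! 2 \<cdot> \<sigma> = Nm r"
      using replace_name_eq_Nm by blast
    show ?thesis
    proof (cases "ws' ! 2")
      case (Var y)
      with W ws'_r have "Nm r \<in> ran \<sigma>"
        using app_subst_Var_eq_Nm[of y r] unfolding recipe_def by simp
      from unique[OF this at_root] show ?thesis by simp
    next
      case (Nm n)
      with ws'_r have "occurs_name r (ws' ! 2)"
        using subterms_refl unfolding occurs_name_def by simp
      with W r(1) show ?thesis
        unfolding recipe_def public_def by blast
    qed (use ws'_r in simp_all)
  next
    case (frame ws')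
    obtain r' where r': "r' \<noteq> s" "length ws' = 3" "ws' ! 2 = Nm r'"
      using frame_encryption_nonce[OF frame(2) enc] by blast
    with eq_r frame(1) have "r' = r" by simp
    with r' have third: "at_pos (Fn f ws') [3] (Nm r)"
      by (simp add: at_pos_third_arg)
    obtain V q where V: "V \<in> ran \<sigma>" "at_pos V q (Fn f ws')"
      using frame(2) unfolding frame_subterms_def subterms_def by blast
    from unique[OF V(1) at_pos_append[OF V(2) third]] have "at_pos V q (Fn f ws)"
      by auto
    with V(2) have "ws' = ws" using at_pos_unique by blast
    with frame show ?thesis by simp
  qed
qed

lemma safe_term_Fn_cases:
  assumes "safe_term ns \<sigma> s (Fn f ts)"
  obtains "\<forall>x\<in>set ts. safe_term ns \<sigma> s x"
  | ws where "f = Enc \<or> f = Enca" "ts = map (\<lambda>t. t \<cdot> \<sigma>) ws" "Fn f ws \<in> frame_subterms \<sigma>"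
  using assms
proof (cases rule: safe_term_Fn)
  case (recipe ws)
  then show thesis using that safe_term_args_recipe by blast
next
  case (frame ws)
  then show thesis using that safe_term_args_frame by blast
qed

lemma replace_name_inj_safe:
  "safe_term ns \<sigma> s t1 \<Longrightarrow> safe_term ns \<sigma> s t2 \<Longrightarrow>
    replace_name t1 s M = replace_name t2 s M \<Longrightarrow> t1 = t2"
proof (induction t1 arbitrary: t2)
  case (Fn f ts1)
  have "replace_name t2 s M = Fn f (map (\<lambda>t. replace_name t s M) ts1)"
    using Fn.prems(3) by simp
  with safe_term_not_secret[OF Fn.prems(2)] obtain ts2 where t2: "t2 = Fn f ts2"
    and args: "map (\<lambda>t. replace_name t s M) ts1 = map (\<lambda>t. replace_name t s M) ts2"
    by (blast dest: replace_name_eq_Fn)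
  have len: "length ts1 = length ts2"
    using map_eq_imp_length_eq[OF args] .
  have safe1: "safe_term ns \<sigma> s (Fn f ts1)" and safe2: "safe_term ns \<sigma> s (Fn f ts2)"
    using Fn.prems t2 by simp_all
  have encryption: "Fn f ts = Fn f ws \<cdot> \<sigma>"
    if "f = Enc \<or> f = Enca" "Fn f ws \<in> frame_subterms \<sigma>" "safe_term ns \<sigma> s (Fn f ts)"
      "map (\<lambda>t. replace_name t s M) ts = map (\<lambda>t. replace_name t s M) (map (\<lambda>t. t \<cdot> \<sigma>) ws)"
    for ts ws
  proof (rule frame_encryption_determined[OF that(2,1,3)])
    have "length ws = 3"
      using wf_term_frame_subterm[OF that(2)] that(1) by auto
    moreover have "length ts = length ws"
      using map_eq_imp_length_eq[OF that(4)] by simp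
    ultimately show "replace_name (ts ! 2) s M = replace_name (ws ! 2 \<cdot> \<sigma>) s M"
      using arg_cong[OF that(4), of "\<lambda>l. l ! 2"] by simp
  qed
  from safe1 show ?case
  proof (cases rule: safe_term_Fn_cases)
    case args1: 1
    from safe2 show ?thesis
    proof (cases rule: safe_term_Fn_cases)
      case args2: 1
      have "ts1 = ts2"
      proof (rule nth_equalityI[OF len])
        fix i assume i: "i < length ts1"
        with len have i2: "i < length ts2" by simp
        have "replace_name (ts1 ! i) s M = replace_name (ts2 ! i) s M"
          using arg_cong[OF args, of "\<lambda>l. l ! i"] i i2 by simp
        then show "ts1 ! i = ts2 ! i"
          using Fn.IH[OF nth_mem[OF i]] args1 args2 nth_mem[OF i] nth_mem[OF i2] by blast
      qed
      with t2 show ?thesis by simp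
    next
      case (2 ws)
      with safe1 args show ?thesis using encryption t2 by simp
    qed
  next
    case (2 ws)
    with safe2 args show ?thesis using encryption[of ws ts2] t2 by simp
  qed
qed (use safe_term_not_secret replace_name_inj_non_Fn in blast)+

end

theorem lemma2p7:
  fixes ns :: "nat set" and \<sigma> :: subst and s :: nat and U V M :: "term"
  assumes "is_frame ns \<sigma>"
    and "s \<in> ns"
    and "well_formed_frame ns \<sigma> s"
    and "\<not> deducible ns \<sigma> (Nm s)"
    and "wf_term U" and "wf_term V" and "wf_term M"
    and "public ns U" and "public ns V" and "public ns M"
    and "vars U \<subseteq> dom \<sigma>" and "vars V \<subseteq> dom \<sigma>"
    and "ground M"
    and "replace_name (U \<cdot> \<sigma>) s M = replace_name (V \<cdot> \<sigma>) s M"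
  shows "U \<cdot> \<sigma> = V \<cdot> \<sigma>"
proof -
  interpret secret_frame ns \<sigma> s
    using assms(1,3,4) by unfold_locales
  have "safe_term ns \<sigma> s (U \<cdot> \<sigma>)" and "safe_term ns \<sigma> s (V \<cdot> \<sigma>)"
    unfolding safe_term_def recipe_def using assms by blast+
  then show ?thesis
    using replace_name_inj_safe assms(14) by blast
qed

end
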